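(* (i) For every feasible transition $s\xrightarrow{\alpha}s'$ of the BDM between states $s,s'\in S$, with $\alpha\in\{D,I,N_=,N_<,d_-,b_+\}$, one has $K(s')=K(s)+1$ if $\alpha=I$, $K(s')=K(s)-1$ if $\alpha=N_<$, and $K(s')=K(s)$ if $\alpha\in\{D,N_=,d_-,b_+\}$. (ii) Consequently, if $s_0\xrightarrow{\alpha_1\cdots\alpha_k}s$ is any path of feasible transitions from the initial state $s_0$ to $s$, and $\#I$, $\#N_<$ denote the numbers of indices $i$ with $\alpha_i=I$, resp. $\alpha_i=N_<$, then $K(s)-K(s_0)=K(s)=\#I-\#N_<$.
   Context: Fix integers $M\ge 1$ and $q\ge 2$. The augmented state set is $\overline S=\{(b_1,\dots,b_M,d;T,t): b_m,d,T\in\mathbb Z,\ 1\le t\le M+1,\ d+T+\sum_{m=1}^M b_m=0\}$, and the BDM state set is $S=\{s\in\overline S: 0\le T\le M\}$. The initial state is $s_0=(0,\dots,0,0;0,M+1)$. The feasible transitions (actions) from $s=(b_1,\dots,b_M,d;T,t)\in S$ are: (a) if $t\le M$ and $b_t>d$: action $D$ (probability $(q-1)/q$) to $(b_1,\dots,b_{t-1},d,b_{t+1},\dots,b_M,b_t;T,t+1)$ (swap of $b_t$ and $d$), and action $I$ (probability $1/q$) to $(b_1,\dots,b_M,d;T,t+1)$; (b) if $t\le M$ and $b_t=d$: action $N_=$ (probability 1) to $(b_1,\dots,b_M,d;T,t+1)$; (c) if $t\le M$ and $b_t<d$: action $N_<$ (probability 1) to $(b_1,\dots,b_M,d;T,t+1)$;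 (d) if $t=M+1$, $T<M$: action $d_-$ (probability 1) to $(b_1,\dots,b_M,d-1;T+1,1)$; (e) if $t=M+1$, $T=M$: action $b_+$ (probability 1) to $(b_1+1,\dots,b_M+1,d;0,1)$. For $s=(b_1,\dots,b_M,d;T,t)\in\overline S$ let $x=(b_1,\dots,b_{t-1},d,b_t,\dots,b_M)$ ($d$ in position $t$), let $\tilde b_1\ge\dots\ge\tilde b_{M+1}$ be its entries sorted nonincreasingly and $\pi_s$ the minimum number of neighbouring transpositions needed to sort $x$ nonincreasingly. The class of $s$ is $K(s)=-\pi_s+MT+2\sum_{m=1}^{M+1}\tilde b_m(M+1-m)$; note $K(s_0)=0$. *)

theory Defs
  imports Main
begin

text \<open>A state (b_1..b_M, d; T, t) is represented as a tuple (b, d, T, t) with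
  b :: int list of length M (b_m = b ! (m-1)), d T :: int, t :: nat.\<close>

type_synonym state = "int list \<times> int \<times> int \<times> nat"

definition in_Sbar :: "nat \<Rightarrow> state \<Rightarrow> bool" where
  "in_Sbar M s = (case s of (b, d, T, t) \<Rightarrow>
     length b = M \<and> 1 \<le> t \<and> t \<le> M + 1 \<and> d + T + sum_list b = 0)"

definition in_S :: "nat \<Rightarrow> state \<Rightarrow> bool" where
  "in_S M s = (in_Sbar M s \<and> (case s of (b, d, T, t) \<Rightarrow> 0 \<le> T \<and> T \<le> int M))"

definition s0 :: "nat \<Rightarrow> state" where
  "s0 M = (replicate M 0, 0, 0, M + 1)"

datatype action = D | I | N_eq | N_lt | d_minus | b_plus

inductive step :: "nat \<Rightarrow> state \<Rightarrow> action \<Rightarrow> state \<Rightarrow> bool" for M where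
  stepD: "in_S M (b, d, T, t) \<Longrightarrow> t \<le> M \<Longrightarrow> b ! (t - 1) > d \<Longrightarrow>
     step M (b, d, T, t) D (b[t - 1 := d], b ! (t - 1), T, t + 1)"
| stepI: "in_S M (b, d, T, t) \<Longrightarrow> t \<le> M \<Longrightarrow> b ! (t - 1) > d \<Longrightarrow>
     step M (b, d, T, t) I (b, d, T, t + 1)"
| stepNeq: "in_S M (b, d, T, t) \<Longrightarrow> t \<le> M \<Longrightarrow> b ! (t - 1) = d \<Longrightarrow>
     step M (b, d, T, t) N_eq (b, d, T, t + 1)"
| stepNlt: "in_S M (b, d, T, t) \<Longrightarrow> t \<le> M \<Longrightarrow> b ! (t - 1) < d \<Longrightarrow>
     step M (b, d, T, t) N_lt (b, d, T, t + 1)"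
| stepdm: "in_S M (b, d, T, t) \<Longrightarrow> t = M + 1 \<Longrightarrow> T < int M \<Longrightarrow>
     step M (b, d, T, t) d_minus (b, d - 1, T + 1, 1)"
| stepbp: "in_S M (b, d, T, t) \<Longrightarrow> t = M + 1 \<Longrightarrow> T = int M \<Longrightarrow>
     step M (b, d, T, t) b_plus (map (\<lambda>x. x + 1) b, d, 0, 1)"

inductive path :: "nat \<Rightarrow> state \<Rightarrow> action list \<Rightarrow> state \<Rightarrow> bool" for M where
  path_nil: "in_S M s \<Longrightarrow> path M s [] s"
| path_snoc: "path M s as s' \<Longrightarrow> step M s' a s'' \<Longrightarrow> in_S M s'' \<Longrightarrow> path M s (as @ [a]) s''"

definition xvec :: "state \<Rightarrow> int list" where
  "xvec s = (case s of (b, d, T, t) \<Rightarrow> take (t - 1) b @ [d] @ drop (t - 1) b)"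

definition adj_swap :: "'a list \<Rightarrow> nat \<Rightarrow> 'a list" where
  "adj_swap xs i = xs[i := xs ! Suc i, Suc i := xs ! i]"

definition sorted_noninc :: "int list \<Rightarrow> bool" where
  "sorted_noninc xs = sorted_wrt (\<ge>) xs"

definition min_adj_swaps :: "int list \<Rightarrow> nat" where
  "min_adj_swaps x = (LEAST n. \<exists>is. length is = n \<and> (\<forall>i\<in>set is. Suc i < length x)
        \<and> sorted_noninc (foldl adj_swap x is))"

definition pi_s :: "state \<Rightarrow> nat" where
  "pi_s s = min_adj_swaps (xvec s)"

text \<open>Entries sorted nonincreasingly: tilde b_m = sorted ! (m-1).\<close>
definition sorted_entries :: "state \<Rightarrow> int list" where
  "sorted_entries s = rev (sort (xvec s))"

definition K :: "nat \<Rightarrow> state \<Rightarrow> int" where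
  "K M s = (case s of (b, d, T, t) \<Rightarrow>
     - int (pi_s s) + int M * T
     + 2 * (\<Sum>m = 1..M + 1. sorted_entries s ! (m - 1) * int (M + 1 - m)))"

definition count_act :: "action \<Rightarrow> action list \<Rightarrow> nat" where
  "count_act a as = length (filter (\<lambda>x. x = a) as)"

end

theory Submission
  imports Defs "HOL-Library.Multiset"
begin

text \<open>
  The minimal number pi of neighbouring transpositions is the number of pairs i < j with
  x_i < x_j, and for the sorted entries y_1 >= ... >= y_(M+1) one has
  2 * sum_m y_m (M + 1 - m) = sum_(x,y) max x y - sum_x x, a symmetric function of x.
  So K = M T - (ascending pairs of x) + (symmetric function of x). Action D leaves x
  unchanged; I, N_= and N_< swap d with its right neighbour, changing the number of
  ascending pairs by -1, 0, +1. Action d_- moves d from the last to the first position and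
  lowers it by one; the changes of the two other terms add up to -M, which T + 1 compensates.
  Finally K is invariant under x -> x + c, T -> T - c (M + 1) on the augmented states, and
  b_+ is d_- followed by such a shift with c = 1.
\<close>

fun ascending_pairs :: "'a::linorder list \<Rightarrow> nat" where
  "ascending_pairs [] = 0"
| "ascending_pairs (a # xs) = length (filter ((<) a) xs) + ascending_pairs xs"

lemma ascending_pairs_append:
  "ascending_pairs (xs @ ys) =
     ascending_pairs xs + ascending_pairs ys + (\<Sum>x\<leftarrow>xs. length (filter ((<) x) ys))"
  by (induction xs) auto

lemma ascending_pairs_swap:
  "int (ascending_pairs (pre @ [b, a] @ post)) = int (ascending_pairs (pre @ [a, b] @ post))
     + (if a < b then -1 else if b < a then 1 else 0)"
proof -
  have "(\<Sum>x\<leftarrow>pre. length (filter ((<) x) ([b, a] @ post)))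
      = (\<Sum>x\<leftarrow>pre. length (filter ((<) x) ([a, b] @ post)))"
    by (intro arg_cong[where f = sum_list] map_cong) auto
  then show ?thesis by (simp only: ascending_pairs_append) auto
qed

lemma adj_swap_split:
  assumes "xs = pre @ [a, b] @ post" "length pre = i"
  shows "adj_swap xs i = pre @ [b, a] @ post"
  using assms by (auto simp: adj_swap_def list_update_append nth_append)

lemma length_adj_swap [simp]: "length (adj_swap xs i) = length xs"
  by (simp add: adj_swap_def)

lemma ascending_pairs_adj_swap:
  assumes "Suc i < length xs"
  shows "int (ascending_pairs (adj_swap xs i)) = int (ascending_pairs xs)
     + (if xs ! i < xs ! Suc i then -1 else if xs ! Suc i < xs ! i then 1 else 0)"
proof -
  define pre post where "pre = take i xs" and "post = drop (Suc (Suc i)) xs"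
  have "drop i xs = xs ! i # xs ! Suc i # post"
    using assms by (simp add: post_def Cons_nth_drop_Suc)
  then have split: "xs = pre @ [xs ! i, xs ! Suc i] @ post"
    unfolding pre_def by (metis append_Cons append_Nil append_take_drop_id)
  have "length pre = i" using assms by (simp add: pre_def)
  with split show ?thesis
    using adj_swap_split ascending_pairs_swap by metis
qed

lemma ascending_pairs_eq_0_iff: "ascending_pairs xs = 0 \<longleftrightarrow> sorted_wrt (\<ge>) xs"
  by (induction xs) (auto simp: filter_empty_conv not_less)

lemma ascending_pairs_le_swaps:
  "\<forall>i\<in>set js. Suc i < length xs \<Longrightarrow>
     ascending_pairs xs \<le> length js + ascending_pairs (foldl adj_swap xs js)"
proof (induction js arbitrary: xs)
  case (Cons i js)
  have "ascending_pairs xs \<le> ascending_pairs (adj_swap xs i) + 1"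
    using ascending_pairs_adj_swap[of i xs] Cons.prems by (auto split: if_split_asm)
  moreover have "ascending_pairs (adj_swap xs i)
      \<le> length js + ascending_pairs (foldl adj_swap (adj_swap xs i) js)"
    using Cons.IH[of "adj_swap xs i"] Cons.prems by simp
  ultimately show ?case by simp
qed simp

lemma ex_sorting_adj_swaps:
  "\<exists>js. length js = ascending_pairs xs \<and> (\<forall>i\<in>set js. Suc i < length xs)
     \<and> sorted_wrt (\<ge>) (foldl adj_swap xs js)"
proof (induction "ascending_pairs xs" arbitrary: xs)
  case 0
  then show ?case by (intro exI[of _ "[]"]) (simp add: ascending_pairs_eq_0_iff)
next
  case (Suc n)
  have "\<not> sorted_wrt (\<ge>) xs" by (metis Suc.hyps(2) ascending_pairs_eq_0_iff Zero_not_Suc)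
  then obtain i where i: "Suc i < length xs" "xs ! i < xs ! Suc i"
    by (auto simp: sorted_wrt_iff_nth_Suc_transp transp_on_def not_le)
  then have "ascending_pairs (adj_swap xs i) = n"
    using ascending_pairs_adj_swap[OF i(1)] Suc.hyps(2) by simp
  then obtain js where "length js = n" "\<forall>k\<in>set js. Suc k < length xs"
     "sorted_wrt (\<ge>) (foldl adj_swap (adj_swap xs i) js)"
    using Suc.hyps(1) by fastforce
  then show ?case using i Suc.hyps(2) by (intro exI[of _ "i # js"]) auto
qed

lemma min_adj_swaps_eq_ascending_pairs: "min_adj_swaps xs = ascending_pairs xs"
  unfolding min_adj_swaps_def sorted_noninc_def
proof (rule Least_equality)
  show "\<exists>js. length js = ascending_pairs xs \<and> (\<forall>i\<in>set js. Suc i < length xs)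
     \<and> sorted_wrt (\<ge>) (foldl adj_swap xs js)"
    by (rule ex_sorting_adj_swaps)
next
  fix n assume "\<exists>js. length js = n \<and> (\<forall>i\<in>set js. Suc i < length xs)
     \<and> sorted_wrt (\<ge>) (foldl adj_swap xs js)"
  then obtain js where "length js = n" "\<forall>i\<in>set js. Suc i < length xs"
    "ascending_pairs (foldl adj_swap xs js) = 0"
    by (auto simp: ascending_pairs_eq_0_iff)
  then show "ascending_pairs xs \<le> n"
    using ascending_pairs_le_swaps by fastforce
qed

lemma ascending_pairs_snoc:
  "ascending_pairs (xs @ [a]) = ascending_pairs xs + length (filter (\<lambda>x. x < a) xs)"
  by (induction xs) auto

lemma ascending_pairs_map_strict_mono:
  assumes "strict_mono f"
  shows "ascending_pairs (map f xs) = ascending_pairs xs"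
proof (induction xs)
  case (Cons a xs)
  have "filter ((<) (f a)) (map f xs) = map f (filter ((<) a) xs)"
    using strict_mono_less[OF assms] by (simp add: filter_map comp_def)
  with Cons show ?case by simp
qed simp

lemma sum_list_map_mset_eq:
  fixes f :: "'a \<Rightarrow> 'b::comm_monoid_add"
  assumes "mset xs = mset ys"
  shows "(\<Sum>x\<leftarrow>xs. f x) = (\<Sum>x\<leftarrow>ys. f x)"
proof -
  have "mset (map f xs) = mset (map f ys)" using assms by simp
  then show ?thesis by (metis sum_mset_sum_list)
qed

definition pair_max_sum :: "int list \<Rightarrow> int" where
  "pair_max_sum xs = (\<Sum>x\<leftarrow>xs. \<Sum>y\<leftarrow>xs. max x y)"

lemma pair_max_sum_mset_eq:
  assumes "mset xs = mset ys"
  shows "pair_max_sum xs = pair_max_sum ys"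
proof -
  have "(\<Sum>x\<leftarrow>xs. \<Sum>y\<leftarrow>xs. max x y) = (\<Sum>x\<leftarrow>xs. \<Sum>y\<leftarrow>ys. max x y)"
    by (intro arg_cong[where f = sum_list] map_cong refl sum_list_map_mset_eq[OF assms])
  also have "\<dots> = (\<Sum>x\<leftarrow>ys. \<Sum>y\<leftarrow>ys. max x y)"
    by (rule sum_list_map_mset_eq[OF assms])
  finally show ?thesis by (simp add: pair_max_sum_def)
qed

lemma pair_max_sum_Cons:
  "pair_max_sum (a # xs) = pair_max_sum xs + 2 * (\<Sum>y\<leftarrow>xs. max a y) + a"
proof -
  have "(\<Sum>x\<leftarrow>xs. max x a) = (\<Sum>y\<leftarrow>xs. max a y)"
    by (intro arg_cong[where f = sum_list] map_cong) (auto simp: max.commute)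
  then show ?thesis by (simp add: pair_max_sum_def sum_list_addf)
qed

lemma pair_max_sum_shift:
  "pair_max_sum (map (\<lambda>x. x + c) xs) = pair_max_sum xs + c * int (length xs) ^ 2"
proof -
  have "pair_max_sum (map (\<lambda>x. x + c) xs) = (\<Sum>x\<leftarrow>xs. \<Sum>y\<leftarrow>xs. max x y + c)"
    by (simp add: pair_max_sum_def comp_def flip: max_add_distrib_left)
  then show ?thesis
    by (simp add: pair_max_sum_def sum_list_addf sum_list_triv power2_eq_square)
qed

lemma weighted_sum_sorted:
  "sorted_wrt (\<ge>) ys \<Longrightarrow>
     2 * (\<Sum>i<length ys. ys ! i * int (length ys - 1 - i)) = pair_max_sum ys - sum_list ys"
proof (induction ys)
  case (Cons a ys)
  let ?n = "length ys" and ?W = "\<Sum>i<length ys. ys ! i * int (length ys - 1 - i)"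
  have "(\<Sum>i<Suc ?n. (a # ys) ! i * int (Suc ?n - 1 - i)) = a * int ?n + ?W"
    by (simp add: sum.lessThan_Suc_shift del: sum.lessThan_Suc)
  moreover have "(\<Sum>y\<leftarrow>ys. max a y) = a * int ?n"
    using Cons.prems by (simp add: sum_list_triv max_absorb1 cong: map_cong)
  moreover have "2 * ?W = pair_max_sum ys - sum_list ys"
    using Cons by simp
  ultimately show ?case
    by (simp only: length_Cons pair_max_sum_Cons sum_list.Cons) (simp add: ring_distribs)
qed (simp add: pair_max_sum_def)

lemma length_xvec [simp]: "length (xvec (b, d, T, t)) = Suc (length b)"
  by (simp add: xvec_def)

lemma K_alt_def:
  assumes "length b = M"
  shows "K M (b, d, T, t) = - int (ascending_pairs (xvec (b, d, T, t))) + int M * T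
           + pair_max_sum (xvec (b, d, T, t)) - sum_list (xvec (b, d, T, t))"
proof -
  define x where "x = xvec (b, d, T, t)"
  define ys where "ys = rev (sort x)"
  have len: "length ys = Suc M" using assms by (simp add: ys_def x_def)
  have perm: "mset ys = mset x" unfolding ys_def by (simp only: mset_rev mset_sort)
  have same: "pair_max_sum ys = pair_max_sum x" "sum_list ys = sum_list x"
    using pair_max_sum_mset_eq[OF perm] sum_list_map_mset_eq[OF perm, of id] by simp_all
  have "(\<Sum>m = 1..M + 1. ys ! (m - 1) * int (M + 1 - m)) = (\<Sum>i = 0..M. ys ! i * int (M - i))"
    using sum.shift_bounds_cl_Suc_ivl[of "\<lambda>m. ys ! (m - 1) * int (M + 1 - m)" 0 M] by simp
  also have "\<dots> = (\<Sum>i<length ys. ys ! i * int (length ys - 1 - i))"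
    by (simp add: len atLeast0AtMost lessThan_Suc_atMost)
  finally have "2 * (\<Sum>m = 1..M + 1. ys ! (m - 1) * int (M + 1 - m)) = pair_max_sum x - sum_list x"
    using weighted_sum_sorted[of ys] same by (simp add: ys_def sorted_wrt_rev)
  then show ?thesis
    by (simp add: K_def pi_s_def sorted_entries_def min_adj_swaps_eq_ascending_pairs
        flip: x_def ys_def)
qed

lemma xvec_split:
  assumes "1 \<le> t" "t \<le> length b"
  shows "xvec (b, d, T, t) = take (t - 1) b @ [d, b ! (t - 1)] @ drop t b"
    and "xvec (b, d, T, t + 1) = take (t - 1) b @ [b ! (t - 1), d] @ drop t b"
proof -
  have "drop (t - 1) b = b ! (t - 1) # drop t b"
    using assms Cons_nth_drop_Suc[of "t - 1" b] by simp
  moreover have "take t b = take (t - 1) b @ [b ! (t - 1)]"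
    using assms take_Suc_conv_app_nth[of "t - 1" b] by simp
  ultimately show "xvec (b, d, T, t) = take (t - 1) b @ [d, b ! (t - 1)] @ drop t b"
    and "xvec (b, d, T, t + 1) = take (t - 1) b @ [b ! (t - 1), d] @ drop t b"
    by (simp_all add: xvec_def)
qed

lemma K_advance_position:
  assumes "length b = M" "1 \<le> t" "t \<le> M"
  shows "K M (b, d, T, t + 1)
       = K M (b, d, T, t) + (if d < b ! (t - 1) then 1 else if b ! (t - 1) < d then -1 else 0)"
proof -
  define pre c post where "pre = take (t - 1) b" and "c = b ! (t - 1)" and "post = drop t b"
  let ?x = "pre @ [d, c] @ post" and ?x' = "pre @ [c, d] @ post"
  have "xvec (b, d, T, t) = ?x" "xvec (b, d, T, t + 1) = ?x'"
    using xvec_split[of t b] assms unfolding pre_def c_def post_def by simp_all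
  then have K:
    "K M (b, d, T, t) = - int (ascending_pairs ?x) + int M * T + pair_max_sum ?x - sum_list ?x"
    "K M (b, d, T, t + 1) = - int (ascending_pairs ?x') + int M * T + pair_max_sum ?x' - sum_list ?x'"
    using K_alt_def[OF assms(1)] by metis+
  have "pair_max_sum ?x' = pair_max_sum ?x"
    by (rule pair_max_sum_mset_eq) simp
  then show ?thesis
    unfolding K c_def[symmetric] using ascending_pairs_swap[of pre c d post] by auto
qed

lemma xvec_exchange:
  assumes "1 \<le> t" "t \<le> length b"
  shows "xvec (b[t - 1 := d], b ! (t - 1), T, t + 1) = xvec (b, d, T, t)"
proof -
  have "t - 1 < length b" using assms by simp
  then have "take (t - 1) (b[t - 1 := d]) = take (t - 1) b" "drop t (b[t - 1 := d]) = drop t b"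
    "b[t - 1 := d] ! (t - 1) = d"
    using assms by simp_all
  then show ?thesis
    using xvec_split[of t "b[t - 1 := d]" "b ! (t - 1)" T] xvec_split[of t b d T] assms by simp
qed

lemma sum_list_max_pred:
  "(\<Sum>y\<leftarrow>b. max d y) = (\<Sum>y\<leftarrow>b. max (d - 1) y) + int (length (filter (\<lambda>y. y < d) b))"
  for d :: int
  by (induction b) auto

lemma K_d_minus:
  assumes "length b = M"
  shows "K M (b, d - 1, T + 1, 1) = K M (b, d, T, M + 1)"
proof -
  have "xvec (b, d, T, M + 1) = b @ [d]" "xvec (b, d - 1, T + 1, 1) = (d - 1) # b"
    using assms by (simp_all add: xvec_def)
  then have K: "K M (b, d, T, M + 1)
      = - int (ascending_pairs (b @ [d])) + int M * T + pair_max_sum (b @ [d]) - sum_list (b @ [d])"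
    "K M (b, d - 1, T + 1, 1) = - int (ascending_pairs ((d - 1) # b)) + int M * (T + 1)
      + pair_max_sum ((d - 1) # b) - sum_list ((d - 1) # b)"
    using K_alt_def[OF assms] by metis+
  have "pair_max_sum (b @ [d]) = pair_max_sum (d # b)"
    by (rule pair_max_sum_mset_eq) simp
  moreover have "filter ((<) (d - 1)) b = filter (\<lambda>y. \<not> y < d) b"
    by (rule filter_cong) auto
  moreover have "length (filter (\<lambda>y. y < d) b) + length (filter (\<lambda>y. \<not> y < d) b) = M"
    using assms sum_length_filter_compl by blast
  ultimately show ?thesis
    unfolding K using sum_list_max_pred[of d b]
    by (simp add: ascending_pairs_snoc pair_max_sum_Cons algebra_simps)
qed

lemma K_shift:
  assumes "length b = M"
  shows "K M (map (\<lambda>x. x + c) b, d + c, T - c * int (M + 1), t) = K M (b, d, T, t)"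
proof -
  let ?x = "xvec (b, d, T, t)"
  have "xvec (map (\<lambda>x. x + c) b, d + c, T - c * int (M + 1), t) = map (\<lambda>x. x + c) ?x"
    by (simp add: xvec_def take_map drop_map)
  then have K: "K M (map (\<lambda>x. x + c) b, d + c, T - c * int (M + 1), t)
      = - int (ascending_pairs (map (\<lambda>x. x + c) ?x)) + int M * (T - c * int (M + 1))
        + pair_max_sum (map (\<lambda>x. x + c) ?x) - sum_list (map (\<lambda>x. x + c) ?x)"
    using K_alt_def[of "map (\<lambda>x. x + c) b" M] assms by (metis length_map)
  have "strict_mono (\<lambda>x::int. x + c)" by (simp add: strict_mono_def)
  then show ?thesis
    unfolding K using assms
    by (simp add: K_alt_def ascending_pairs_map_strict_mono pair_max_sum_shift sum_list_addf
        sum_list_triv power2_eq_square algebra_simps)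
qed

lemma K_b_plus:
  assumes "length b = M"
  shows "K M (map (\<lambda>x. x + 1) b, d, 0, 1) = K M (b, d, int M, M + 1)"
proof -
  have "K M (map (\<lambda>x. x + 1) b, d, 0, 1)
      = K M (map (\<lambda>x. x + 1) b, (d - 1) + 1, (int M + 1) - 1 * int (M + 1), 1)"
    by simp
  also have "\<dots> = K M (b, d - 1, int M + 1, 1)" by (rule K_shift[OF assms])
  also have "\<dots> = K M (b, d, int M, M + 1)" by (rule K_d_minus[OF assms])
  finally show ?thesis .
qed

fun K_increment :: "action \<Rightarrow> int" where
  "K_increment I = 1"
| "K_increment N_lt = -1"
| "K_increment _ = 0"

lemma K_step:
  assumes "step M s a s'"
  shows "K M s' = K M s + K_increment a"
  using assms
proof cases
  case (stepD b d T t)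
  then have "length b = M" "1 \<le> t" by (simp_all add: in_S_def in_Sbar_def)
  with stepD show ?thesis
    using xvec_exchange[of t b d T] by (simp add: K_def pi_s_def sorted_entries_def)
next
  case (stepI b d T t)
  then show ?thesis using K_advance_position[of b M t d T] by (simp add: in_S_def in_Sbar_def)
next
  case (stepNeq b d T t)
  then show ?thesis using K_advance_position[of b M t d T] by (simp add: in_S_def in_Sbar_def)
next
  case (stepNlt b d T t)
  then show ?thesis using K_advance_position[of b M t d T] by (simp add: in_S_def in_Sbar_def)
next
  case (stepdm b d T t)
  then show ?thesis using K_d_minus[of b M d T] by (simp add: in_S_def in_Sbar_def)
next
  case (stepbp b d T t)
  then show ?thesis using K_b_plus[of b M d] by (simp add: in_S_def in_Sbar_def)
qed

lemma K_path:
  "path M s as s' \<Longrightarrow> K M s' = K M s + (\<Sum>a\<leftarrow>as. K_increment a)"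
  by (induction rule: path.induct) (auto dest: K_step)

lemma K_s0: "K M (s0 M) = 0"
proof -
  have x: "xvec (s0 M) = replicate (M + 1) 0"
    by (simp add: xvec_def s0_def replicate_append_same)
  have "ascending_pairs (replicate n (0::int)) = 0" for n
    by (simp add: ascending_pairs_eq_0_iff sorted_wrt_iff_nth_less)
  then show ?thesis
    using K_alt_def[of "replicate M 0" M 0 0 "M + 1"] x
    by (simp add: s0_def pair_max_sum_def sum_list_replicate)
qed

lemma sum_K_increment:
  "(\<Sum>a\<leftarrow>as. K_increment a) = int (count_act I as) - int (count_act N_lt as)"
proof (induction as)
  case (Cons a as)
  then show ?case by (cases a) (auto simp: count_act_def)
qed (simp add: count_act_def)

theorem theorem8:
  fixes M :: nat
  assumes "M \<ge> 1"
  shows "(\<forall>s a s'. in_S M s \<longrightarrow> in_S M s' \<longrightarrow> step M s a s' \<longrightarrow>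
            (a = I \<longrightarrow> K M s' = K M s + 1) \<and>
            (a = N_lt \<longrightarrow> K M s' = K M s - 1) \<and>
            (a \<in> {D, N_eq, d_minus, b_plus} \<longrightarrow> K M s' = K M s))
       \<and> (\<forall>as s. path M (s0 M) as s \<longrightarrow>
            K M s - K M (s0 M) = K M s \<and>
            K M s = int (count_act I as) - int (count_act N_lt as))"
proof (intro conjI allI impI)
  fix s a s' assume "step M s a s'"
  then have "K M s' = K M s + K_increment a" by (rule K_step)
  then show "a = I \<Longrightarrow> K M s' = K M s + 1" "a = N_lt \<Longrightarrow> K M s' = K M s - 1"
    "a \<in> {D, N_eq, d_minus, b_plus} \<Longrightarrow> K M s' = K M s" by auto
next
  fix as s assume "path M (s0 M) as s"
  then show "K M s - K M (s0 M) = K M s" "K M s = int (count_act I as) - int (count_act N_lt as)"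
    using K_path K_s0 sum_K_increment by auto
qed

end
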